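(* Let $G$ be a finite simple graph without isolated vertices that contains exactly two odd cycles. Then $G$ is $(3,2)$-critical if and only if $G\in\mathcal A\cup\mathcal B$, where $\mathcal A=\{C_{2k+1}+C_{2\ell+1} : k,\ell\ge1\}$ ($+$ denotes disjoint union) and $\mathcal B$ is the family of graphs obtained from $C_{2k+1}+C_{2\ell+1}$, $k,\ell\ge1$, by identifying a vertex of $C_{2k+1}$ with a vertex of $C_{2\ell+1}$.
   Context: An odd cycle is a cycle (subgraph) of odd length. For a graph $G$, ${\rm es}_{\chi}(G)$ is the minimum number of edges of $G$ whose removal results in a spanning subgraph $G_1$ with $\chi(G_1)=\chi(G)-1$. $G$ is edge-stability critical if ${\rm es}_{\chi}(G-e)<{\rm es}_{\chi}(G)$ for every edge $e$. $G$ is $(3,2)$-critical if it is edge-stability critical with $\chi(G)=3$ and ${\rm es}_{\chi}(G)=2$. *)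

theory Defs
  imports Main
begin

definition simple_graph :: "'a set \<Rightarrow> 'a set set \<Rightarrow> bool" where
  "simple_graph V E \<longleftrightarrow> finite V \<and> (\<forall>e\<in>E. \<exists>u v. e = {u, v} \<and> u \<noteq> v \<and> u \<in> V \<and> v \<in> V)"

definition no_isolated_vertices :: "'a set \<Rightarrow> 'a set set \<Rightarrow> bool" where
  "no_isolated_vertices V E \<longleftrightarrow> (\<forall>v\<in>V. \<exists>e\<in>E. v \<in> e)"

definition cyc_edges :: "'a list \<Rightarrow> 'a set set" where
  "cyc_edges xs = {{xs ! i, xs ! ((i + 1) mod length xs)} | i. i < length xs}"

definition cycle_list :: "'a list \<Rightarrow> bool" where
  "cycle_list xs \<longleftrightarrow> distinct xs \<and> length xs \<ge> 3"

text \<open>The odd cycles (as subgraphs, identified by their edge sets) of G.\<close>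
definition odd_cycles :: "'a set \<Rightarrow> 'a set set \<Rightarrow> 'a set set set" where
  "odd_cycles V E = {C. \<exists>xs. cycle_list xs \<and> odd (length xs) \<and> set xs \<subseteq> V
                         \<and> C = cyc_edges xs \<and> C \<subseteq> E}"

definition colorable :: "'a set \<Rightarrow> 'a set set \<Rightarrow> nat \<Rightarrow> bool" where
  "colorable V E k \<longleftrightarrow> (\<exists>f :: 'a \<Rightarrow> nat. (\<forall>v\<in>V. f v < k) \<and> (\<forall>u v. {u, v} \<in> E \<longrightarrow> f u \<noteq> f v))"

definition chi :: "'a set \<Rightarrow> 'a set set \<Rightarrow> nat" where
  "chi V E = (LEAST k. colorable V E k)"

definition es_chi :: "'a set \<Rightarrow> 'a set set \<Rightarrow> nat" where
  "es_chi V E = (LEAST k. \<exists>F \<subseteq> E. card F = k \<and> chi V (E - F) = chi V E - 1)"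

definition edge_stability_critical :: "'a set \<Rightarrow> 'a set set \<Rightarrow> bool" where
  "edge_stability_critical V E \<longleftrightarrow> (\<forall>e\<in>E. es_chi V (E - {e}) < es_chi V E)"

definition critical_3_2 :: "'a set \<Rightarrow> 'a set set \<Rightarrow> bool" where
  "critical_3_2 V E \<longleftrightarrow> edge_stability_critical V E \<and> chi V E = 3 \<and> es_chi V E = 2"

definition family_A :: "'a set \<Rightarrow> 'a set set \<Rightarrow> bool" where
  "family_A V E \<longleftrightarrow> (\<exists>xs ys. cycle_list xs \<and> cycle_list ys \<and> odd (length xs) \<and> odd (length ys)
     \<and> set xs \<inter> set ys = {} \<and> V = set xs \<union> set ys \<and> E = cyc_edges xs \<union> cyc_edges ys)"

definition family_B :: "'a set \<Rightarrow> 'a set set \<Rightarrow> bool" where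
  "family_B V E \<longleftrightarrow> (\<exists>xs ys x. cycle_list xs \<and> cycle_list ys \<and> odd (length xs) \<and> odd (length ys)
     \<and> set xs \<inter> set ys = {x} \<and> V = set xs \<union> set ys \<and> E = cyc_edges xs \<union> cyc_edges ys)"

end

theory Submission
  imports Defs
begin

text \<open>If P and Q are the only odd cycles, a spanning subgraph is bipartite iff it
  misses an edge of P and an edge of Q. So es_chi = 2 forces P and Q to be
  edge-disjoint, and criticality forces E = P \<union> Q, since deleting an edge outside
  P \<union> Q would not lower es_chi. Two common vertices u, v are impossible: by the
  parity of the arcs between u and v, one edge of P and one edge of Q can be deleted so
  that the remaining paths force u and v to get both equal and different colors in a
  2-coloring of the rest. Conversely, for such a union a vertex of each cycle outside
  the other can take a third color, and deleting one cycle edge leaves a single odd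
  cycle, so es_chi drops to 1.\<close>

lemma simple_graph_edgeD:
  assumes "simple_graph V E" "{u, v} \<in> E"
  shows "u \<noteq> v" "u \<in> V" "v \<in> V"
proof -
  obtain a b where "{u, v} = {a, b}" "a \<noteq> b" "a \<in> V" "b \<in> V"
    using assms unfolding simple_graph_def by blast
  then show "u \<noteq> v" "u \<in> V" "v \<in> V" by (metis doubleton_eq_iff)+
qed

lemma simple_graph_edgeE:
  assumes "simple_graph V E" "e \<in> E"
  obtains u v where "e = {u, v}"
proof -
  have "\<forall>e\<in>E. \<exists>u v. e = {u, v} \<and> u \<noteq> v \<and> u \<in> V \<and> v \<in> V"
    using assms(1) unfolding simple_graph_def by (rule conjunct2)
  then show ?thesis using assms(2) that by meson
qed

lemma simple_graph_edge_subset: "simple_graph V E \<Longrightarrow> e \<in> E \<Longrightarrow> e \<subseteq> V"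
  unfolding simple_graph_def by fastforce

lemma simple_graph_mono: "simple_graph V E \<Longrightarrow> E' \<subseteq> E \<Longrightarrow> simple_graph V E'"
  unfolding simple_graph_def by (meson subsetD)

lemma simple_graph_finite_edges:
  assumes "simple_graph V E" shows "finite E"
proof (rule finite_subset)
  show "E \<subseteq> Pow V" using simple_graph_edge_subset[OF assms] by blast
  show "finite (Pow V)" using assms unfolding simple_graph_def by simp
qed

definition cyc_nth :: "'a list \<Rightarrow> nat \<Rightarrow> 'a" where
  "cyc_nth xs k = xs ! (k mod length xs)"

lemma cyc_nth_in_set: "xs \<noteq> [] \<Longrightarrow> cyc_nth xs k \<in> set xs"
  unfolding cyc_nth_def by simp

lemma cyc_nth_eq_iff:
  assumes "distinct xs" "xs \<noteq> []"
  shows "cyc_nth xs a = cyc_nth xs b \<longleftrightarrow> a mod length xs = b mod length xs"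
  using assms unfolding cyc_nth_def by (simp add: nth_eq_iff_index_eq)

lemma cyc_edges_cyc_nth:
  "cyc_edges xs = {{cyc_nth xs i, cyc_nth xs (Suc i)} | i. i < length xs}"
proof -
  have "{xs ! i, xs ! ((i + 1) mod length xs)} = {cyc_nth xs i, cyc_nth xs (Suc i)}"
    if "i < length xs" for i
    using that by (simp add: cyc_nth_def)
  then show ?thesis unfolding cyc_edges_def by metis
qed

lemma cyc_nth_edge: "xs \<noteq> [] \<Longrightarrow> {cyc_nth xs k, cyc_nth xs (Suc k)} \<in> cyc_edges xs"
  unfolding cyc_edges_cyc_nth cyc_nth_def
  by (rule CollectI, rule exI[of _ "k mod length xs"]) (simp add: mod_Suc_eq)

lemma cyc_nth_edge_inj:
  assumes "cycle_list xs"
    and "{cyc_nth xs k, cyc_nth xs (Suc k)} = {cyc_nth xs m, cyc_nth xs (Suc m)}"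
  shows "k mod length xs = m mod length xs"
proof (rule ccontr)
  let ?n = "length xs"
  assume ne: "k mod ?n \<noteq> m mod ?n"
  have d: "distinct xs" "xs \<noteq> []" and n3: "3 \<le> ?n"
    using assms(1) unfolding cycle_list_def by auto
  then have "k mod ?n = Suc m mod ?n" "Suc k mod ?n = m mod ?n"
    using assms(2) ne unfolding doubleton_eq_iff cyc_nth_eq_iff[OF d] by auto
  then have "Suc (Suc m) mod ?n = m mod ?n" by (metis mod_Suc_eq)
  then have "?n dvd 2" by (simp add: mod_eq_dvd_iff_nat)
  with n3 show False using dvd_imp_le[of ?n 2] by simp
qed

lemma cyc_edges_ends:
  assumes "cycle_list xs" "e \<in> cyc_edges xs"
  obtains a b where "e = {a, b}" "a \<noteq> b" "a \<in> set xs" "b \<in> set xs"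
proof -
  have d: "distinct xs" "xs \<noteq> []" and n3: "3 \<le> length xs"
    using assms(1) unfolding cycle_list_def by auto
  obtain k where e: "e = {cyc_nth xs k, cyc_nth xs (Suc k)}"
    using assms(2) unfolding cyc_edges_cyc_nth by blast
  have "k mod length xs \<noteq> Suc k mod length xs"
    using n3 by (simp add: mod_Suc)
  then show ?thesis
    using that[OF e] cyc_nth_in_set[OF d(2)] unfolding cyc_nth_eq_iff[OF d] by blast
qed

lemma cyc_edges_subset_set: "cycle_list xs \<Longrightarrow> e \<in> cyc_edges xs \<Longrightarrow> e \<subseteq> set xs"
  by (metis cyc_edges_ends empty_subsetI insert_subset)

lemma cyc_edges_Diff_nonempty:
  assumes "cycle_list xs" shows "cyc_edges xs - {e} \<noteq> {}"
proof -
  have ne: "xs \<noteq> []" and n3: "3 \<le> length xs" using assms unfolding cycle_list_def by auto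
  let ?e0 = "{cyc_nth xs 0, cyc_nth xs (Suc 0)}"
    and ?e1 = "{cyc_nth xs (Suc 0), cyc_nth xs (Suc (Suc 0))}"
  have "?e0 \<noteq> ?e1" using cyc_nth_edge_inj[OF assms, of 0 "Suc 0"] n3 by auto
  then show ?thesis using cyc_nth_edge[OF ne, of 0] cyc_nth_edge[OF ne, of "Suc 0"] by blast
qed

lemma cyc_edges_vertex:
  assumes "y \<in> set xs" obtains e where "e \<in> cyc_edges xs" "y \<in> e"
proof -
  obtain i where "i < length xs" "y = xs ! i" using assms by (metis in_set_conv_nth)
  then show ?thesis using that unfolding cyc_edges_def by blast
qed

definition proper_coloring :: "'a set set \<Rightarrow> ('a \<Rightarrow> nat) \<Rightarrow> bool" where
  "proper_coloring E c \<longleftrightarrow> (\<forall>u v. {u, v} \<in> E \<longrightarrow> c u \<noteq> c v)"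

lemma colorable_iff_proper_coloring:
  "colorable V E k \<longleftrightarrow> (\<exists>c. (\<forall>v\<in>V. c v < k) \<and> proper_coloring E c)"
  unfolding colorable_def proper_coloring_def ..

lemma proper_coloring_antimono: "proper_coloring E c \<Longrightarrow> E' \<subseteq> E \<Longrightarrow> proper_coloring E' c"
  unfolding proper_coloring_def by blast

lemma mod_2_flip: "x < 2 \<Longrightarrow> y < (2::nat) \<Longrightarrow> x \<noteq> y \<Longrightarrow> x = d mod 2 \<Longrightarrow> y = Suc d mod 2"
  by presburger

lemma mod_2_add_odd: "x < 2 \<Longrightarrow> odd n \<Longrightarrow> (x + n) mod 2 \<noteq> (x::nat)"
  by presburger

lemma mod_2_eq_iff_even: "x < 2 \<Longrightarrow> y < 2 \<Longrightarrow> y = (x + d) mod 2 \<Longrightarrow> x = y \<longleftrightarrow> even (d::nat)"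
  by presburger

lemma odd_arc_lengths: "odd n \<Longrightarrow> i < j \<Longrightarrow> j < n \<Longrightarrow> even (n + i - j) \<longleftrightarrow> odd (j - i :: nat)"
  by presburger

lemma proper_2_coloring_walk_parity:
  assumes "proper_coloring E c" "\<And>k. c (g k) < 2" "a \<le> b"
    and "\<And>k. a \<le> k \<Longrightarrow> k < b \<Longrightarrow> {g k, g (Suc k)} \<in> E"
  shows "c (g b) = (c (g a) + (b - a)) mod 2"
  using assms(3)
proof (induction b rule: dec_induct)
  case base
  show ?case using assms(2)[of a] by simp
next
  case (step n)
  have "c (g n) \<noteq> c (g (Suc n))"
    using assms(1,4) step.hyps unfolding proper_coloring_def by blast
  then have "c (g (Suc n)) = Suc (c (g a) + (n - a)) mod 2"
    by (rule mod_2_flip[OF assms(2)[of n] assms(2)[of "Suc n"] _ step.IH])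
  with step.hyps(1) show ?case by (simp add: Suc_diff_le)
qed

lemma odd_cycle_not_colorable_2:
  assumes "xs \<noteq> []" "odd (length xs)" "set xs \<subseteq> V" "cyc_edges xs \<subseteq> E"
  shows "\<not> colorable V E 2"
proof
  assume "colorable V E 2"
  then obtain c where c: "\<forall>v\<in>V. c v < 2" "proper_coloring E c"
    unfolding colorable_iff_proper_coloring by blast
  let ?g = "cyc_nth xs" and ?n = "length xs"
  have col: "c (?g k) < 2" for k using c(1) assms(3) cyc_nth_in_set[OF assms(1)] by blast
  have "c (?g ?n) = (c (?g 0) + (?n - 0)) mod 2"
    by (rule proper_2_coloring_walk_parity[OF c(2), of ?g 0 ?n])
      (use col cyc_nth_edge[OF assms(1)] assms(4) in auto)
  moreover have "?g ?n = ?g 0" unfolding cyc_nth_def by simp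
  ultimately have "c (?g 0) = (c (?g 0) + ?n) mod 2" by simp
  with mod_2_add_odd[OF col[of 0] assms(2)] show False by simp
qed

inductive walk :: "'a set set \<Rightarrow> 'a \<Rightarrow> 'a \<Rightarrow> nat \<Rightarrow> bool" for E where
  walk_refl: "walk E u u 0"
| walk_snoc: "walk E u v n \<Longrightarrow> {v, w} \<in> E \<Longrightarrow> walk E u w (Suc n)"

lemma walk_trans: "walk E v w n \<Longrightarrow> walk E u v m \<Longrightarrow> walk E u w (m + n)"
proof (induction rule: walk.induct)
  case (walk_snoc v w n x)
  then show ?case using walk.walk_snoc[of E u w "m + n" x] by simp
qed simp

lemma walk_edge: "{u, v} \<in> E \<Longrightarrow> walk E u v 1"
  using walk_snoc[OF walk_refl] by simp

lemma walk_sym: "walk E u v n \<Longrightarrow> walk E v u n"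
proof (induction rule: walk.induct)
  case (walk_refl u)
  show ?case by (rule walk.walk_refl)
next
  case (walk_snoc u v n w)
  have "walk E w v 1" using walk_snoc.hyps(2) walk_edge[of w v E] by (simp add: insert_commute)
  from walk_trans[OF walk_snoc.IH this] show ?case by simp
qed

lemma walk_vertex_sequence:
  assumes "walk E u v n"
  shows "\<exists>g. g 0 = u \<and> g n = v \<and> (\<forall>k<n. {g k, g (Suc k)} \<in> E)"
  using assms
proof (induction rule: walk.induct)
  case (walk_refl u)
  show ?case by (rule exI[of _ "\<lambda>_. u"]) simp
next
  case (walk_snoc u v n w)
  then obtain g where g: "g 0 = u" "g n = v" "\<forall>k<n. {g k, g (Suc k)} \<in> E" by blast
  have "{(g(Suc n := w)) k, (g(Suc n := w)) (Suc k)} \<in> E" if "k < Suc n" for k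
    using g walk_snoc.hyps(2) that by (cases "k = n") auto
  then show ?case using g by (intro exI[of _ "g(Suc n := w)"]) auto
qed

lemma cyc_edges_map_upt_subset:
  assumes "a < b" "g b = g a" "\<And>k. a \<le> k \<Longrightarrow> k < b \<Longrightarrow> {g k, g (Suc k)} \<in> E"
  shows "cyc_edges (map g [a..<b]) \<subseteq> E"
proof
  fix e assume "e \<in> cyc_edges (map g [a..<b])"
  then obtain i where i: "i < b - a"
    "e = {map g [a..<b] ! i, map g [a..<b] ! ((i + 1) mod (b - a))}"
    unfolding cyc_edges_def by auto
  have "map g [a..<b] ! ((i + 1) mod (b - a)) = g (Suc (a + i))"
  proof (cases "i + 1 < b - a")
    case False
    then have "i + 1 = b - a" using i(1) by simp
    then have "(i + 1) mod (b - a) = 0" "Suc (a + i) = b" by auto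
    then show ?thesis using assms(1,2) by simp
  qed simp
  then have "e = {g (a + i), g (Suc (a + i))}" using i by simp
  then show "e \<in> E" using assms(3) i(1) by simp
qed

lemma odd_closed_walk_odd_cycle:
  assumes "\<forall>a. {a, a} \<notin> E" "odd (length xs)" "cyc_edges xs \<subseteq> E"
  shows "\<exists>ys. cycle_list ys \<and> odd (length ys) \<and> set ys \<subseteq> set xs \<and> cyc_edges ys \<subseteq> E"
  using assms(2,3)
proof (induction "length xs" arbitrary: xs rule: less_induct)
  case less
  let ?n = "length xs" and ?g = "cyc_nth xs"
  have ne: "xs \<noteq> []" using less.prems(1) by auto
  show ?case
  proof (cases "distinct xs")
    case True
    have "?n \<noteq> 1"
    proof
      assume "?n = 1"
      then have "{xs ! 0, xs ! 0} \<in> cyc_edges xs" unfolding cyc_edges_def by force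
      then show False using assms(1) less.prems(2) by blast
    qed
    then have "cycle_list xs" using True less.prems(1) unfolding cycle_list_def by presburger
    then show ?thesis using less.prems by blast
  next
    case False
    then obtain i j where ij: "i < j" "j < ?n" "xs ! i = xs ! j"
      by (metis distinct_conv_nth linorder_neqE_nat)
    have edge: "{?g k, ?g (Suc k)} \<in> E" for k using cyc_nth_edge[OF ne] less.prems(2) by blast
    have in_set: "?g k \<in> set xs" for k using cyc_nth_in_set[OF ne] .
    have "?g j = ?g i" "?g (?n + i) = ?g j" using ij by (simp_all add: cyc_nth_def)
    then have closed: "cyc_edges (map ?g [i..<j]) \<subseteq> E" "cyc_edges (map ?g [j..<?n + i]) \<subseteq> E"
      using ij edge by (simp_all add: cyc_edges_map_upt_subset)
    have "odd (j - i) \<or> odd (?n + i - j)" using less.prems(1) ij by presburger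
    moreover have "j - i < ?n" "?n + i - j < ?n" using ij by auto
    ultimately obtain zs where "length zs < ?n" "odd (length zs)" "cyc_edges zs \<subseteq> E"
        "set zs \<subseteq> set xs"
      using closed in_set by (metis (no_types, lifting) diff_zero image_subset_iff length_map
          length_upt set_map)
    then show ?thesis using less.hyps by (meson order_trans)
  qed
qed

lemma set_subset_if_cyc_edges_subset:
  assumes "simple_graph V E" "cyc_edges ys \<subseteq> E" shows "set ys \<subseteq> V"
proof
  fix y assume "y \<in> set ys"
  then obtain e where e: "e \<in> cyc_edges ys" "y \<in> e" by (rule cyc_edges_vertex)
  have "e \<subseteq> V" using e(1) assms(2) by (intro simple_graph_edge_subset[OF assms(1)]) blast
  then show "y \<in> V" using e(2) by blast
qed

lemma odd_closed_walk_imp_odd_cycles: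
  assumes "simple_graph V E" "walk E u u n" "odd n"
  shows "odd_cycles V E \<noteq> {}"
proof -
  obtain g where g: "g 0 = u" "g n = u" "\<forall>k<n. {g k, g (Suc k)} \<in> E"
    using walk_vertex_sequence[OF assms(2)] by blast
  have "cyc_edges (map g [0..<n]) \<subseteq> E"
    by (rule cyc_edges_map_upt_subset) (use odd_pos[OF assms(3)] g in auto)
  moreover have "\<forall>a. {a, a} \<notin> E" using simple_graph_edgeD(1)[OF assms(1)] by metis
  moreover have "odd (length (map g [0..<n]))" using assms(3) by simp
  ultimately obtain ys where ys: "cycle_list ys" "odd (length ys)" "cyc_edges ys \<subseteq> E"
    using odd_closed_walk_odd_cycle by metis
  then have "cyc_edges ys \<in> odd_cycles V E"
    using set_subset_if_cyc_edges_subset[OF assms(1) ys(3)] unfolding odd_cycles_def by blast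
  then show ?thesis by blast
qed

lemma walk_parity_unique:
  assumes "\<And>w n. walk E w w n \<Longrightarrow> even n" "walk E u v m" "walk E u v n"
  shows "m mod 2 = n mod 2"
proof -
  have "walk E u u (n + m)" using walk_trans[OF walk_sym[OF assms(2)] assms(3)] .
  then have "even (n + m)" by (rule assms(1))
  then show ?thesis by presburger
qed

text \<open>Color each vertex by the parity of a walk to it from a fixed vertex of its
  component; without odd closed walks this parity does not depend on the walk.\<close>
lemma colorable_2_if_no_odd_cycles:
  assumes "simple_graph V E" "odd_cycles V E = {}"
  shows "colorable V E 2"
proof -
  have even_closed: "even n" if "walk E w w n" for w n
    using odd_closed_walk_imp_odd_cycles[OF assms(1) that] assms(2) by blast
  define root where "root v = (SOME r. \<exists>n. walk E r v n)" for v
  define col where "col v = (SOME n. walk E (root v) v n) mod 2" for v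
  have root_walk: "\<exists>n. walk E (root v) v n" for v
    unfolding root_def by (rule someI[of _ v], rule exI, rule walk.walk_refl)
  have col: "col v = n mod 2" if "walk E (root v) v n" for v n
  proof -
    have "walk E (root v) v (SOME n. walk E (root v) v n)" using that by (rule someI)
    from walk_parity_unique[OF even_closed this that] show ?thesis unfolding col_def .
  qed
  have "col u \<noteq> col v" if uv: "{u, v} \<in> E" for u v
  proof -
    have "walk E v u 1" using walk_edge[of v u E] uv by (simp add: insert_commute)
    then have "(\<exists>n. walk E r u n) \<longleftrightarrow> (\<exists>n. walk E r v n)" for r
      using walk_trans[OF \<open>walk E v u 1\<close>, of r] walk_trans[OF walk_edge[OF uv], of r] by blast
    then have root: "root u = root v" unfolding root_def by simp
    obtain k where k: "walk E (root u) u k" using root_walk by blast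
    have "walk E (root v) v (k + 1)" using walk_trans[OF walk_edge[OF uv] k] root by simp
    then have "col v = (k + 1) mod 2" by (rule col)
    moreover have "col u = k mod 2" using k by (rule col)
    ultimately show ?thesis by presburger
  qed
  then have "proper_coloring E col" unfolding proper_coloring_def by blast
  moreover have "\<forall>v\<in>V. col v < 2" unfolding col_def by simp
  ultimately show ?thesis unfolding colorable_iff_proper_coloring by blast
qed

lemma odd_cycles_subgraph:
  "E' \<subseteq> E \<Longrightarrow> odd_cycles V E' = {C \<in> odd_cycles V E. C \<subseteq> E'}"
  unfolding odd_cycles_def by (rule set_eqI) blast

lemma colorable_card:
  assumes "simple_graph V E" shows "colorable V E (card V)"
proof -
  obtain h where h: "bij_betw h V {0..<card V}"
    using assms ex_bij_betw_finite_nat unfolding simple_graph_def by blast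
  then have "\<forall>v\<in>V. h v < card V" by (auto simp: bij_betw_def)
  moreover have "proper_coloring E h"
    unfolding proper_coloring_def
    using simple_graph_edgeD[OF assms] h by (metis bij_betw_def inj_on_def)
  ultimately show ?thesis unfolding colorable_iff_proper_coloring by blast
qed

lemma colorable_chi: "simple_graph V E \<Longrightarrow> colorable V E (chi V E)"
  unfolding chi_def by (rule LeastI, rule colorable_card)

lemma chi_le: "colorable V E k \<Longrightarrow> chi V E \<le> k"
  unfolding chi_def by (rule Least_le)

lemma colorable_mono: "colorable V E k \<Longrightarrow> k \<le> k' \<Longrightarrow> colorable V E k'"
  unfolding colorable_def by (meson order_less_le_trans)

lemma colorable_antimono: "colorable V E k \<Longrightarrow> E' \<subseteq> E \<Longrightarrow> colorable V E' k"
  unfolding colorable_def by blast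

lemma chi_le_iff: "simple_graph V E \<Longrightarrow> chi V E \<le> k \<longleftrightarrow> colorable V E k"
  by (meson chi_le colorable_chi colorable_mono)

lemma chi_mono: "simple_graph V E \<Longrightarrow> E' \<subseteq> E \<Longrightarrow> chi V E' \<le> chi V E"
  by (meson chi_le colorable_antimono colorable_chi)

lemma chi_le_2_iff:
  assumes "simple_graph V E" shows "chi V E \<le> 2 \<longleftrightarrow> odd_cycles V E = {}"
proof
  assume "chi V E \<le> 2"
  then have col: "colorable V E 2" using chi_le_iff[OF assms] by blast
  show "odd_cycles V E = {}"
  proof (rule ccontr)
    assume "odd_cycles V E \<noteq> {}"
    then obtain xs where xs: "cycle_list xs" "odd (length xs)" "set xs \<subseteq> V" "cyc_edges xs \<subseteq> E"
      unfolding odd_cycles_def by blast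
    then have "xs \<noteq> []" unfolding cycle_list_def by auto
    from odd_cycle_not_colorable_2[OF this xs(2-4)] col show False by contradiction
  qed
qed (rule chi_le[OF colorable_2_if_no_odd_cycles[OF assms]])

lemma not_colorable_1:
  assumes "simple_graph V E" "{u, v} \<in> E" shows "\<not> colorable V E 1"
proof
  assume "colorable V E 1"
  then obtain c where "\<forall>v\<in>V. c v < 1" "proper_coloring E c"
    unfolding colorable_iff_proper_coloring by blast
  then have "c u \<noteq> c v" "c u < 1" "c v < 1"
    using simple_graph_edgeD[OF assms] assms(2) unfolding proper_coloring_def by blast+
  then show False by simp
qed

lemma chi_eq_2:
  assumes "simple_graph V E" "E \<noteq> {}" "odd_cycles V E = {}" shows "chi V E = 2"
proof -
  obtain e where "e \<in> E" using assms(2) by blast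
  moreover obtain u v where "e = {u, v}" using simple_graph_edgeE[OF assms(1) \<open>e \<in> E\<close>] .
  ultimately have "\<not> chi V E \<le> 1" using chi_le_iff[OF assms(1)] not_colorable_1[OF assms(1)] by blast
  then show ?thesis using chi_le_2_iff[OF assms(1)] assms(3) by simp
qed

lemma es_chi_le: "F \<subseteq> E \<Longrightarrow> chi V (E - F) = chi V E - 1 \<Longrightarrow> es_chi V E \<le> card F"
  unfolding es_chi_def by (rule Least_le) blast

lemma es_chi_eqI:
  assumes "F \<subseteq> E" "chi V (E - F) = chi V E - 1"
    and "\<And>F'. F' \<subseteq> E \<Longrightarrow> chi V (E - F') = chi V E - 1 \<Longrightarrow> card F \<le> card F'"
  shows "es_chi V E = card F"
  unfolding es_chi_def by (rule Least_equality) (use assms in auto)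

lemma colorable_3I:
  assumes "simple_graph V E" "{a, p} \<notin> E" "\<forall>C\<in>odd_cycles V E. \<exists>e\<in>C. a \<in> e \<or> p \<in> e"
  shows "colorable V E 3"
proof -
  define E' where "E' = {e \<in> E. a \<notin> e \<and> p \<notin> e}"
  have sub: "E' \<subseteq> E" unfolding E'_def by blast
  have "odd_cycles V E' = {}"
    using odd_cycles_subgraph[OF sub] assms(3) unfolding E'_def by blast
  then obtain c where c: "\<forall>v\<in>V. c v < 2" "proper_coloring E' c"
    using colorable_2_if_no_odd_cycles[OF simple_graph_mono[OF assms(1) sub]]
    unfolding colorable_iff_proper_coloring by blast
  define c' where "c' = c(a := 2, p := 2)"
  have c'_ap: "c' x = 2" if "x \<in> {a, p}" for x using that unfolding c'_def by auto
  have c'_other: "c' x = c x" if "x \<notin> {a, p}" for x using that unfolding c'_def by auto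
  have "c' x \<noteq> c' y" if xy: "{x, y} \<in> E" for x y
  proof (cases "x \<in> {a, p} \<or> y \<in> {a, p}")
    case True
    have "x \<noteq> y" "x \<in> V" "y \<in> V" using simple_graph_edgeD[OF assms(1) xy] by auto
    have "\<not> (x \<in> {a, p} \<and> y \<in> {a, p})"
    proof
      assume "x \<in> {a, p} \<and> y \<in> {a, p}"
      with \<open>x \<noteq> y\<close> have "{x, y} = {a, p}" by auto
      with xy assms(2) show False by simp
    qed
    with True have "x \<in> {a, p} \<and> y \<notin> {a, p} \<or> y \<in> {a, p} \<and> x \<notin> {a, p}" by blast
    then show ?thesis using c'_ap c'_other c(1) \<open>x \<in> V\<close> \<open>y \<in> V\<close> by fastforce
  next
    case False
    then have "{x, y} \<in> E'" using xy unfolding E'_def by auto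
    then show ?thesis using False c(2) c'_other unfolding proper_coloring_def by simp
  qed
  moreover have "\<forall>v\<in>V. c' v < 3" using c(1) unfolding c'_def by auto
  ultimately show ?thesis unfolding colorable_iff_proper_coloring proper_coloring_def by blast
qed

lemma cycle_arc_parity:
  assumes "cycle_list xs"
    and "proper_coloring (cyc_edges xs - {{cyc_nth xs m, cyc_nth xs (Suc m)}}) c"
    and "\<forall>x\<in>set xs. c x < 2" and "a \<le> b"
    and "\<And>k. a \<le> k \<Longrightarrow> k < b \<Longrightarrow> k mod length xs \<noteq> m mod length xs"
  shows "c (cyc_nth xs b) = (c (cyc_nth xs a) + (b - a)) mod 2"
proof -
  have ne: "xs \<noteq> []" using assms(1) unfolding cycle_list_def by auto
  show ?thesis
  proof (rule proper_2_coloring_walk_parity[OF assms(2) _ assms(4)])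
    show "c (cyc_nth xs k) < 2" for k using assms(3) cyc_nth_in_set[OF ne] by blast
    show "{cyc_nth xs k, cyc_nth xs (Suc k)} \<in> cyc_edges xs - {{cyc_nth xs m, cyc_nth xs (Suc m)}}"
      if "a \<le> k" "k < b" for k
      using cyc_nth_edge[OF ne, of k] cyc_nth_edge_inj[OF assms(1), of k m] assms(5)[OF that]
      by blast
  qed
qed

text \<open>The two arcs of an odd cycle between distinct vertices have lengths of opposite
  parity; deleting an edge of one arc leaves the other as a path, which fixes whether
  the two vertices get equal colors.\<close>
lemma odd_cycle_forcing_edge_index:
  assumes "cycle_list xs" "odd (length xs)" "i < j" "j < length xs"
  obtains e where "e \<in> cyc_edges xs"
    "\<And>c. proper_coloring (cyc_edges xs - {e}) c \<Longrightarrow> \<forall>x\<in>set xs. c x < 2 \<Longrightarrow>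
      c (xs ! i) = c (xs ! j) \<longleftrightarrow> same"
proof -
  let ?n = "length xs" and ?g = "cyc_nth xs"
  have ne: "xs \<noteq> []" using assms(4) by auto
  have g: "?g i = xs ! i" "?g j = xs ! j" "?g (?n + i) = xs ! i"
    using assms(3,4) by (simp_all add: cyc_nth_def)
  have col: "c (xs ! i) < 2" "c (xs ! j) < 2" if "\<forall>x\<in>set xs. c x < 2" for c :: "'a \<Rightarrow> nat"
    using that assms(3,4) by simp_all
  show ?thesis
  proof (cases "same \<longleftrightarrow> even (j - i)")
    case True
    show ?thesis
    proof (rule that[OF cyc_nth_edge[OF ne, of j]])
      fix c assume c: "proper_coloring (cyc_edges xs - {{?g j, ?g (Suc j)}}) c" "\<forall>x\<in>set xs. c x < 2"
      have "c (?g j) = (c (?g i) + (j - i)) mod 2"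
        by (rule cycle_arc_parity[OF assms(1) c]) (use assms(3,4) in auto)
      then show "c (xs ! i) = c (xs ! j) \<longleftrightarrow> same"
        using True mod_2_eq_iff_even[OF col[OF c(2)]] g by simp
    qed
  next
    case False
    show ?thesis
    proof (rule that[OF cyc_nth_edge[OF ne, of i]])
      fix c assume c: "proper_coloring (cyc_edges xs - {{?g i, ?g (Suc i)}}) c" "\<forall>x\<in>set xs. c x < 2"
      have "k mod ?n \<noteq> i mod ?n" if k: "j \<le> k" "k < ?n + i" for k
      proof (cases "k < ?n")
        case False
        then have "k mod ?n = k - ?n" using k assms(3,4) by (simp add: le_mod_geq)
        then show ?thesis using False k assms(3,4) by simp
      qed (use k assms(3,4) in simp)
      then have "c (?g (?n + i)) = (c (?g j) + (?n + i - j)) mod 2"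
        by (intro cycle_arc_parity[OF assms(1) c]) (use assms(3,4) in auto)
      then have "c (xs ! j) = c (xs ! i) \<longleftrightarrow> even (?n + i - j)"
        using mod_2_eq_iff_even[OF col(2,1)[OF c(2)]] g by simp
      then show "c (xs ! i) = c (xs ! j) \<longleftrightarrow> same"
        using False odd_arc_lengths[OF assms(2-4)] by auto
    qed
  qed
qed

lemma odd_cycle_forcing_edge:
  assumes "cycle_list xs" "odd (length xs)" "u \<in> set xs" "v \<in> set xs" "u \<noteq> v"
  obtains e where "e \<in> cyc_edges xs"
    "\<And>c. proper_coloring (cyc_edges xs - {e}) c \<Longrightarrow> \<forall>x\<in>set xs. c x < 2 \<Longrightarrow>
      c u = c v \<longleftrightarrow> same"
proof -
  obtain i j where ij: "i < length xs" "xs ! i = u" "j < length xs" "xs ! j = v"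
    using assms(3,4) by (metis in_set_conv_nth)
  then have "i \<noteq> j" using assms(5) by auto
  then consider "i < j" | "j < i" by linarith
  then show ?thesis
  proof cases
    case 1
    then obtain e where e: "e \<in> cyc_edges xs"
      "\<And>c. proper_coloring (cyc_edges xs - {e}) c \<Longrightarrow> \<forall>x\<in>set xs. c x < 2 \<Longrightarrow>
        c (xs ! i) = c (xs ! j) \<longleftrightarrow> same"
      using odd_cycle_forcing_edge_index[OF assms(1,2) _ ij(3)] by blast
    show ?thesis by (rule that[OF e(1)]) (use e(2) ij in blast)
  next
    case 2
    then obtain e where e: "e \<in> cyc_edges xs"
      "\<And>c. proper_coloring (cyc_edges xs - {e}) c \<Longrightarrow> \<forall>x\<in>set xs. c x < 2 \<Longrightarrow>
        c (xs ! j) = c (xs ! i) \<longleftrightarrow> same"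
      using odd_cycle_forcing_edge_index[OF assms(1,2) _ ij(1)] by blast
    show ?thesis
    proof (rule that[OF e(1)])
      fix c assume "proper_coloring (cyc_edges xs - {e}) c" "\<forall>x\<in>set xs. c x < 2"
      then have "c (xs ! j) = c (xs ! i) \<longleftrightarrow> same" by (rule e(2))
      then show "c u = c v \<longleftrightarrow> same" using ij by auto
    qed
  qed
qed

lemma cycle_vertex_outside:
  assumes "cycle_list xs" "set xs \<inter> S \<subseteq> {x}" shows "\<exists>a\<in>set xs. a \<notin> S"
proof (rule ccontr)
  assume "\<not> (\<exists>a\<in>set xs. a \<notin> S)"
  then have "set xs \<subseteq> {x}" using assms(2) by blast
  then have "card (set xs) \<le> 1" using card_mono[of "{x}" "set xs"] by simp
  moreover have "card (set xs) = length xs" "3 \<le> length xs"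
    using assms(1) distinct_card unfolding cycle_list_def by auto
  ultimately show False by simp
qed

lemma cyc_edges_disjoint:
  assumes "cycle_list xs" "cycle_list ys" "set xs \<inter> set ys \<subseteq> {x}"
  shows "cyc_edges xs \<inter> cyc_edges ys = {}"
proof (rule ccontr)
  assume "cyc_edges xs \<inter> cyc_edges ys \<noteq> {}"
  then obtain e where e: "e \<in> cyc_edges xs" "e \<in> cyc_edges ys" by blast
  obtain a b where ab: "e = {a, b}" "a \<noteq> b" by (rule cyc_edges_ends[OF assms(1) e(1)])
  have "e \<subseteq> set xs \<inter> set ys"
    using cyc_edges_subset_set[OF assms(1) e(1)] cyc_edges_subset_set[OF assms(2) e(2)] by blast
  then show False using ab assms(3) by blast
qed

lemma card_ge_2_if_meets_disjoint:
  assumes "finite F" "A \<inter> B = {}" "A \<inter> F \<noteq> {}" "B \<inter> F \<noteq> {}"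
  shows "2 \<le> card F"
proof -
  obtain a b where "a \<in> A \<inter> F" "b \<in> B \<inter> F" using assms(3,4) by blast
  then have "a \<noteq> b" "{a, b} \<subseteq> F" using assms(2) by auto
  then show ?thesis using card_mono[OF assms(1), of "{a, b}"] by simp
qed

locale two_odd_cycles =
  fixes V :: "'a set" and E :: "'a set set" and xs ys :: "'a list"
  assumes simple: "simple_graph V E"
    and odd_cycles_eq: "odd_cycles V E = {cyc_edges xs, cyc_edges ys}"
    and cycle_xs: "cycle_list xs" and cycle_ys: "cycle_list ys"
    and odd_xs: "odd (length xs)" and odd_ys: "odd (length ys)"
begin

abbreviation "P \<equiv> cyc_edges xs"
abbreviation "Q \<equiv> cyc_edges ys"

lemma swap: "two_odd_cycles V E ys xs"
proof
  show "odd_cycles V E = {Q, P}" by (subst insert_commute) (rule odd_cycles_eq)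
qed (fact simple cycle_ys cycle_xs odd_ys odd_xs)+

lemma cycles_subset: "P \<subseteq> E" "Q \<subseteq> E"
proof -
  have "P \<in> odd_cycles V E" "Q \<in> odd_cycles V E" by (simp_all add: odd_cycles_eq)
  then show "P \<subseteq> E" "Q \<subseteq> E"
    unfolding odd_cycles_def mem_Collect_eq by (elim exE conjE, simp)+
qed

lemma cycle_sets_subset: "set xs \<subseteq> V" "set ys \<subseteq> V"
  using set_subset_if_cyc_edges_subset[OF simple cycles_subset(1)]
    set_subset_if_cyc_edges_subset[OF simple cycles_subset(2)] .

lemma odd_cycles_subgraph_empty_iff:
  assumes "E' \<subseteq> E"
  shows "odd_cycles V E' = {} \<longleftrightarrow> \<not> P \<subseteq> E' \<and> \<not> Q \<subseteq> E'"
proof -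
  have "odd_cycles V E' = {C \<in> {P, Q}. C \<subseteq> E'}"
    using odd_cycles_subgraph[OF assms] by (simp add: odd_cycles_eq)
  then show ?thesis by auto
qed

lemma chi_subgraph_eq_2:
  assumes "E' \<subseteq> E" "E' \<noteq> {}" "\<not> P \<subseteq> E'" "\<not> Q \<subseteq> E'"
  shows "chi V E' = 2"
  using chi_eq_2[OF simple_graph_mono[OF simple assms(1)] assms(2)]
    odd_cycles_subgraph_empty_iff[OF assms(1)] assms(3,4) by blast

lemma chi_subgraph_ge_3:
  assumes "E' \<subseteq> E" "P \<subseteq> E' \<or> Q \<subseteq> E'"
  shows "3 \<le> chi V E'"
  using chi_le_2_iff[OF simple_graph_mono[OF simple assms(1)]]
    odd_cycles_subgraph_empty_iff[OF assms(1)] assms(2) by linarith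

lemma es_chi_le_1_if_shared_edge:
  assumes "e \<in> P" "e \<in> Q" "chi V E = 3"
  shows "es_chi V E \<le> 1"
proof -
  obtain r where "r \<in> P" "r \<noteq> e" using cyc_edges_Diff_nonempty[OF cycle_xs, of e] by blast
  then have "r \<in> E - {e}" using cycles_subset(1) by blast
  then have "chi V (E - {e}) = 2"
    using assms(1,2) by (intro chi_subgraph_eq_2) blast+
  then have "chi V (E - {e}) = chi V E - 1" using assms(3) by simp
  moreover have "{e} \<subseteq> E" using assms(1) cycles_subset(1) by blast
  ultimately show ?thesis using es_chi_le[of "{e}" E V] by simp
qed

lemma es_chi_subgraph_eq_2:
  assumes "P \<inter> Q = {}" "E' \<subseteq> E" "P \<union> Q \<subseteq> E'" "chi V E' = 3"
  shows "es_chi V E' = 2"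
proof -
  obtain p q where pq: "p \<in> P" "q \<in> Q"
    using cyc_edges_Diff_nonempty[OF cycle_xs] cyc_edges_Diff_nonempty[OF cycle_ys] by blast
  then have "p \<noteq> q" using assms(1) by blast
  then have card_pq: "card {p, q} = 2" by simp
  obtain r where "r \<in> P" "r \<noteq> p" using cyc_edges_Diff_nonempty[OF cycle_xs, of p] by blast
  then have "r \<in> E' - {p, q}" using assms(1,3) pq by blast
  then have "chi V (E' - {p, q}) = 2"
    using assms(2) pq by (intro chi_subgraph_eq_2) blast+
  then have chi_pq: "chi V (E' - {p, q}) = chi V E' - 1" using assms(4) by simp
  have "2 \<le> card F" if F: "F \<subseteq> E'" "chi V (E' - F) = chi V E' - 1" for F
  proof (rule ccontr)
    assume "\<not> 2 \<le> card F"
    moreover have "finite F"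
      using F(1) assms(2) simple_graph_finite_edges[OF simple] by (meson finite_subset)
    ultimately have "P \<inter> F = {} \<or> Q \<inter> F = {}"
      using card_ge_2_if_meets_disjoint[OF _ assms(1)] by blast
    then have "P \<subseteq> E' - F \<or> Q \<subseteq> E' - F" using assms(3) by blast
    then have "3 \<le> chi V (E' - F)" using assms(2) by (intro chi_subgraph_ge_3) blast+
    then show False using F(2) assms(4) by simp
  qed
  moreover have "{p, q} \<subseteq> E'" using assms(3) pq by blast
  ultimately have "es_chi V E' = card {p, q}"
    by (intro es_chi_eqI[OF _ chi_pq]) (simp_all add: card_pq)
  then show ?thesis using card_pq by simp
qed

lemma es_chi_Diff_cycle_edge_le_1:
  assumes "P \<inter> Q = {}" "chi V E = 3" "e \<in> P"
  shows "es_chi V (E - {e}) \<le> 1"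
proof -
  obtain q where q: "q \<in> Q" using cyc_edges_Diff_nonempty[OF cycle_ys] by blast
  obtain r where r: "r \<in> P" "r \<noteq> e" using cyc_edges_Diff_nonempty[OF cycle_xs, of e] by blast
  have e_notin: "e \<notin> Q" using assms(1,3) by blast
  have r_in: "r \<in> E - {e} - {q}" using r q assms(1) cycles_subset(1) by blast
  have "3 \<le> chi V (E - {e})"
    using cycles_subset(2) e_notin by (intro chi_subgraph_ge_3) blast+
  moreover have "chi V (E - {e}) \<le> chi V E" by (rule chi_mono[OF simple]) blast
  moreover have "chi V (E - {e} - {q}) = 2"
    using r_in assms(3) q by (intro chi_subgraph_eq_2) blast+
  ultimately have "chi V (E - {e} - {q}) = chi V (E - {e}) - 1" using assms(2) by simp
  moreover have "{q} \<subseteq> E - {e}" using e_notin q cycles_subset(2) by blast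
  ultimately show ?thesis using es_chi_le[of "{q}" "E - {e}" V] by simp
qed

lemma cycle_edges_disjoint_if_es_chi_2:
  assumes "chi V E = 3" "es_chi V E = 2"
  shows "P \<inter> Q = {}"
  using es_chi_le_1_if_shared_edge assms by fastforce

lemma edges_subset_cycles_if_critical:
  assumes "P \<inter> Q = {}" "chi V E = 3" "\<forall>e\<in>E. es_chi V (E - {e}) < 2"
  shows "E \<subseteq> P \<union> Q"
proof
  fix e assume e: "e \<in> E"
  show "e \<in> P \<union> Q"
  proof (rule ccontr)
    assume "e \<notin> P \<union> Q"
    then have cycles: "P \<union> Q \<subseteq> E - {e}" using cycles_subset by blast
    have "3 \<le> chi V (E - {e})" using cycles by (intro chi_subgraph_ge_3) blast+
    moreover have "chi V (E - {e}) \<le> chi V E" by (rule chi_mono[OF simple]) blast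
    ultimately have "es_chi V (E - {e}) = 2"
      using assms(1,2) cycles by (intro es_chi_subgraph_eq_2) auto
    then show False using assms(3) e by fastforce
  qed
qed

lemma cycle_vertices_share_at_most_one:
  assumes "P \<inter> Q = {}"
  shows "\<exists>x. set xs \<inter> set ys \<subseteq> {x}"
proof (rule ccontr)
  assume "\<nexists>x. set xs \<inter> set ys \<subseteq> {x}"
  then obtain u v where uv: "u \<in> set xs" "u \<in> set ys" "v \<in> set xs" "v \<in> set ys" "u \<noteq> v"
    by blast
  obtain e where e: "e \<in> P"
    and same: "\<And>c. proper_coloring (P - {e}) c \<Longrightarrow> \<forall>x\<in>set xs. c x < 2 \<Longrightarrow>
      c u = c v \<longleftrightarrow> True"
    using odd_cycle_forcing_edge[OF cycle_xs odd_xs uv(1,3,5)] by blast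
  obtain e' where e': "e' \<in> Q"
    and diff: "\<And>c. proper_coloring (Q - {e'}) c \<Longrightarrow> \<forall>x\<in>set ys. c x < 2 \<Longrightarrow>
      c u = c v \<longleftrightarrow> False"
    using odd_cycle_forcing_edge[OF cycle_ys odd_ys uv(2,4,5)] by blast
  define E' where "E' = E - {e, e'}"
  have sub: "E' \<subseteq> E" unfolding E'_def by blast
  have "odd_cycles V E' = {}"
    using odd_cycles_subgraph_empty_iff[OF sub] e e' unfolding E'_def by blast
  then obtain c where c: "\<forall>v\<in>V. c v < 2" "proper_coloring E' c"
    using colorable_2_if_no_odd_cycles[OF simple_graph_mono[OF simple sub]]
    unfolding colorable_iff_proper_coloring by blast
  have "P - {e} \<subseteq> E'" "Q - {e'} \<subseteq> E'"
    using cycles_subset e e' assms unfolding E'_def by blast+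
  then have "proper_coloring (P - {e}) c" "proper_coloring (Q - {e'}) c"
    using proper_coloring_antimono[OF c(2)] by blast+
  moreover have "\<forall>x\<in>set xs. c x < 2" "\<forall>x\<in>set ys. c x < 2"
    using c(1) cycle_sets_subset by blast+
  ultimately show False using same diff by blast
qed

lemma vertices_eq_if_no_isolated:
  assumes "no_isolated_vertices V E" "E \<subseteq> P \<union> Q"
  shows "V = set xs \<union> set ys"
proof
  show "V \<subseteq> set xs \<union> set ys"
  proof
    fix v assume "v \<in> V"
    then obtain e where "e \<in> E" "v \<in> e" using assms(1) unfolding no_isolated_vertices_def by blast
    then show "v \<in> set xs \<union> set ys"
      using assms(2) cyc_edges_subset_set[OF cycle_xs] cyc_edges_subset_set[OF cycle_ys] by blast
  qed
  show "set xs \<union> set ys \<subseteq> V" using cycle_sets_subset by blast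
qed

lemma colorable_3_if_union:
  assumes "set xs \<inter> set ys \<subseteq> {x}" "E = P \<union> Q"
  shows "colorable V E 3"
proof -
  obtain a where a: "a \<in> set xs" "a \<notin> set ys"
    using cycle_vertex_outside[OF cycle_xs assms(1)] by blast
  obtain p where p: "p \<in> set ys" "p \<notin> set xs"
    using cycle_vertex_outside[OF cycle_ys, of "set xs" x] assms(1) by blast
  have "{a, p} \<notin> E"
    using a(2) p(2) cyc_edges_subset_set[OF cycle_xs] cyc_edges_subset_set[OF cycle_ys]
    unfolding assms(2) by blast
  moreover obtain ea where "ea \<in> P" "a \<in> ea" using cyc_edges_vertex[OF a(1)] by blast
  moreover obtain ep where "ep \<in> Q" "p \<in> ep" using cyc_edges_vertex[OF p(1)] by blast
  ultimately show ?thesis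
    by (intro colorable_3I[OF simple]) (auto simp: odd_cycles_eq)
qed

lemma critical_if_union:
  assumes "set xs \<inter> set ys \<subseteq> {x}" "E = P \<union> Q"
  shows "critical_3_2 V E"
proof -
  have disj: "P \<inter> Q = {}" by (rule cyc_edges_disjoint[OF cycle_xs cycle_ys assms(1)])
  have "chi V E \<le> 3" by (rule chi_le[OF colorable_3_if_union[OF assms]])
  moreover have "3 \<le> chi V E" using cycles_subset by (intro chi_subgraph_ge_3) auto
  ultimately have chi: "chi V E = 3" by simp
  have es: "es_chi V E = 2" using disj chi assms(2) by (intro es_chi_subgraph_eq_2) auto
  have "es_chi V (E - {e}) < es_chi V E" if "e \<in> E" for e
  proof -
    have "e \<in> P \<or> e \<in> Q" using that assms(2) by blast
    then have "es_chi V (E - {e}) \<le> 1"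
      using es_chi_Diff_cycle_edge_le_1[OF disj chi]
        two_odd_cycles.es_chi_Diff_cycle_edge_le_1[OF swap, of e] disj chi by blast
    then show ?thesis using es by simp
  qed
  then show ?thesis
    unfolding critical_3_2_def edge_stability_critical_def using chi es by blast
qed

lemma union_if_critical:
  assumes "no_isolated_vertices V E" "critical_3_2 V E"
  shows "\<exists>x. set xs \<inter> set ys \<subseteq> {x} \<and> V = set xs \<union> set ys \<and> E = P \<union> Q"
proof -
  have chi: "chi V E = 3" and es: "es_chi V E = 2"
    and crit: "\<forall>e\<in>E. es_chi V (E - {e}) < 2"
    using assms(2) unfolding critical_3_2_def edge_stability_critical_def by auto
  have disj: "P \<inter> Q = {}" by (rule cycle_edges_disjoint_if_es_chi_2[OF chi es])
  have E: "E \<subseteq> P \<union> Q" by (rule edges_subset_cycles_if_critical[OF disj chi crit])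
  then have "E = P \<union> Q" using cycles_subset by blast
  then show ?thesis
    using cycle_vertices_share_at_most_one[OF disj] vertices_eq_if_no_isolated[OF assms(1) E]
    by blast
qed

end

lemma family_A_or_B_iff:
  "family_A V E \<or> family_B V E \<longleftrightarrow>
    (\<exists>xs ys x. cycle_list xs \<and> cycle_list ys \<and> odd (length xs) \<and> odd (length ys)
      \<and> set xs \<inter> set ys \<subseteq> {x} \<and> V = set xs \<union> set ys \<and> E = cyc_edges xs \<union> cyc_edges ys)"
  (is "_ \<longleftrightarrow> (\<exists>xs ys x. ?fam xs ys x)")
proof
  assume "family_A V E \<or> family_B V E"
  then show "\<exists>xs ys x. ?fam xs ys x" unfolding family_A_def family_B_def by blast
next
  assume "\<exists>xs ys x. ?fam xs ys x"
  then obtain xs ys x where fam: "?fam xs ys x" by blast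
  then have "set xs \<inter> set ys = {} \<or> set xs \<inter> set ys = {x}" by blast
  then show "family_A V E \<or> family_B V E"
    unfolding family_A_def family_B_def using fam by blast
qed

lemma card_2_eq:
  assumes "card A = 2" "a \<in> A" "b \<in> A" "a \<noteq> b"
  shows "A = {a, b}"
proof -
  have "finite A" by (rule card_ge_0_finite) (simp add: assms(1))
  moreover have "{a, b} \<subseteq> A" "card {a, b} = card A" using assms by auto
  ultimately have "{a, b} = A" by (rule card_subset_eq)
  then show ?thesis by simp
qed

lemma odd_cyclesI:
  "cycle_list xs \<Longrightarrow> odd (length xs) \<Longrightarrow> set xs \<subseteq> V \<Longrightarrow> cyc_edges xs \<subseteq> E \<Longrightarrow>
    cyc_edges xs \<in> odd_cycles V E"
  unfolding odd_cycles_def by blast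

lemma odd_cyclesE:
  assumes "C \<in> odd_cycles V E"
  obtains xs where "cycle_list xs" "odd (length xs)" "C = cyc_edges xs"
proof -
  from assms obtain xs where "cycle_list xs \<and> odd (length xs) \<and> C = cyc_edges xs"
    unfolding odd_cycles_def by blast
  then show ?thesis using that by blast
qed

lemma two_odd_cycles_if_card_2:
  assumes "simple_graph V E" "card (odd_cycles V E) = 2"
  obtains xs ys where "two_odd_cycles V E xs ys"
proof -
  obtain C D where CD: "odd_cycles V E = {C, D}"
    using assms(2) unfolding card_2_iff by blast
  obtain xs where xs: "cycle_list xs" "odd (length xs)" "C = cyc_edges xs"
    by (rule odd_cyclesE[of C V E]) (simp add: CD)
  obtain ys where ys: "cycle_list ys" "odd (length ys)" "D = cyc_edges ys"
    by (rule odd_cyclesE[of D V E]) (simp add: CD)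
  have "odd_cycles V E = {cyc_edges xs, cyc_edges ys}" using CD xs(3) ys(3) by simp
  with assms(1) xs(1,2) ys(1,2) have "two_odd_cycles V E xs ys"
    by (intro two_odd_cycles.intro)
  then show ?thesis by (rule that)
qed

lemma two_odd_cycles_if_union:
  assumes "simple_graph V E" "card (odd_cycles V E) = 2"
    and "cycle_list xs" "cycle_list ys" "odd (length xs)" "odd (length ys)"
    and "set xs \<inter> set ys \<subseteq> {x}" "V = set xs \<union> set ys" "E = cyc_edges xs \<union> cyc_edges ys"
  shows "two_odd_cycles V E xs ys"
proof
  have "cyc_edges xs \<in> odd_cycles V E" "cyc_edges ys \<in> odd_cycles V E"
    using assms(3-6,8,9) by (simp_all add: odd_cyclesI)
  moreover have "cyc_edges xs \<noteq> cyc_edges ys"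
    using cyc_edges_disjoint[OF assms(3,4,7)] cyc_edges_Diff_nonempty[OF assms(3)] by blast
  ultimately show "odd_cycles V E = {cyc_edges xs, cyc_edges ys}"
    by (rule card_2_eq[OF assms(2)])
qed (fact assms)+

theorem theorem2p2:
  fixes V :: "'a set" and E :: "'a set set"
  assumes "simple_graph V E"
    and "no_isolated_vertices V E"
    and "card (odd_cycles V E) = 2"
  shows "critical_3_2 V E \<longleftrightarrow> (family_A V E \<or> family_B V E)"
proof
  assume crit: "critical_3_2 V E"
  obtain xs ys where cycles: "two_odd_cycles V E xs ys"
    using two_odd_cycles_if_card_2[OF assms(1,3)] .
  then obtain x where "set xs \<inter> set ys \<subseteq> {x}" "V = set xs \<union> set ys"
      "E = cyc_edges xs \<union> cyc_edges ys"
    using two_odd_cycles.union_if_critical[OF cycles assms(2) crit] by blast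
  with cycles show "family_A V E \<or> family_B V E"
    unfolding family_A_or_B_iff two_odd_cycles_def
    by (intro exI[of _ xs] exI[of _ ys] exI[of _ x]) simp
next
  assume "family_A V E \<or> family_B V E"
  then obtain xs ys x where fam: "cycle_list xs" "cycle_list ys" "odd (length xs)"
      "odd (length ys)" "set xs \<inter> set ys \<subseteq> {x}" "V = set xs \<union> set ys"
      "E = cyc_edges xs \<union> cyc_edges ys"
    unfolding family_A_or_B_iff by blast
  then have "two_odd_cycles V E xs ys" by (intro two_odd_cycles_if_union[OF assms(1,3)])
  from this fam(5,7) show "critical_3_2 V E" by (rule two_odd_cycles.critical_if_union)
qed

end
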